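(* Let $f,g:\mathbb{R}^2\to\mathbb{R}$ be Lipschitz continuous and consider the graphon dynamical system on $I=[0,1]$ with Lebesgue measure and constant graphon $W\equiv1$: \[ \dot u_x=f\Big(u_x,\int_0^1 g(u_x,u_y)\,dy\Big),\qquad u\in L^1(I). \] The following subsets of $L^1(I)$ are dynamically invariant: (i) for every measurable $A\subseteq I$, the cluster subspace $\mathcal C(A)$; (ii) for every measurable $A_1,\ldots,A_n\subseteq I$, the subspace $\bigcap_{k=1}^n\mathcal C(A_k)$; (iii) the set of functions that are injective up to a null set; (iv) for every positive integer $q$, the set of almost everywhere $(1/q)$-periodic functions, i.e. $u$ with $u(x+1/q \bmod 1)=u(x)$ for a.e. $x$; (v) the set of functions satisfying $u_x=u_{1-x}$ for almost every $x$.
   Context: The equation holds, for each $t$, for almost every $x$. $\mathcal C(A)$ is the set of $u\in L^1(I)$ that are constant on $A$ up to a null set. A function is injective up to a null set if its restriction to the complement of some null set is injective. Dynamically invariant means every trajectory starting in the set stays in it for all $t\in\mathbb{R}$. *)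

theory Defs
  imports "HOL-Analysis.Analysis"
begin

abbreviation II :: "real measure" where "II \<equiv> lebesgue_on {0..1}"

definition L1I :: "(real \<Rightarrow> real) set" where
  "L1I = {u. integrable II u}"

definition rhs :: "(real \<Rightarrow> real \<Rightarrow> real) \<Rightarrow> (real \<Rightarrow> real \<Rightarrow> real) \<Rightarrow> (real \<Rightarrow> real) \<Rightarrow> real \<Rightarrow> real" where
  "rhs f g v x = f (v x) (\<integral>y. g (v x) (v y) \<partial>II)"

text \<open>A trajectory: a map u : R -> L^1(I) which is differentiable in L^1(I) at every time t,
  and whose derivative equals the right-hand side almost everywhere in x.\<close>
definition trajectory :: "(real \<Rightarrow> real \<Rightarrow> real) \<Rightarrow> (real \<Rightarrow> real \<Rightarrow> real) \<Rightarrow> (real \<Rightarrow> real \<Rightarrow> real) \<Rightarrow> bool" where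
  "trajectory f g u \<longleftrightarrow>
     (\<forall>t. u t \<in> L1I) \<and>
     (\<forall>t. ((\<lambda>h. \<integral>\<^sup>+ x. ennreal \<bar>(u (t + h) x - u t x) / h - rhs f g (u t) x\<bar> \<partial>II)
            \<longlongrightarrow> 0) (at 0))"

definition dyn_invariant :: "(real \<Rightarrow> real \<Rightarrow> real) \<Rightarrow> (real \<Rightarrow> real \<Rightarrow> real) \<Rightarrow> (real \<Rightarrow> real) set \<Rightarrow> bool" where
  "dyn_invariant f g S \<longleftrightarrow> (\<forall>u. trajectory f g u \<and> u 0 \<in> S \<longrightarrow> (\<forall>t. u t \<in> S))"

definition cluster :: "real set \<Rightarrow> (real \<Rightarrow> real) set" where
  "cluster A = {u \<in> L1I. \<exists>c. AE x in II. x \<in> A \<longrightarrow> u x = c}"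

definition inj_ae_set :: "(real \<Rightarrow> real) set" where
  "inj_ae_set = {u \<in> L1I. \<exists>N \<in> null_sets II. inj_on u ({0..1} - N)}"

definition periodic_set :: "nat \<Rightarrow> (real \<Rightarrow> real) set" where
  "periodic_set q = {u \<in> L1I. AE x in II. u (frac (x + 1 / real q)) = u x}"

definition symm_set :: "(real \<Rightarrow> real) set" where
  "symm_set = {u \<in> L1I. AE x in II. u x = u (1 - x)}"

end

theory Submission
  imports Defs
begin

text \<open>
  With the constant graphon the mean field \<open>\<integral> g a (u y) dy\<close> does not depend on \<open>x\<close>, so the
  right-hand side is \<open>H (u x)\<close> for one Lipschitz map \<open>H\<close>, and the difference of two
  components \<open>u x - u y\<close> changes at a rate bounded by a multiple of itself. Averaging over
  pairs \<open>(p\<^sub>1 \<omega>, p\<^sub>2 \<omega>)\<close> sampled by maps with bounded pull-back on \<open>L\<^sup>1\<close>, the \<open>L\<^sup>1\<close>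
  derivative of the trajectory and a Gronwall argument give
  \<open>\<integral> \<bar>u s (p\<^sub>1 \<omega>) - u s (p\<^sub>2 \<omega>)\<bar> \<le> exp (K \<bar>s - t\<bar>) \<integral> \<bar>u t (p\<^sub>1 \<omega>) - u t (p\<^sub>2 \<omega>)\<bar>\<close>;
  restricting to arbitrary measurable sets turns this into a bound almost everywhere.

  Symmetry and periodicity are a.e. coincidences \<open>u (p\<^sub>1 x) = u (p\<^sub>2 x)\<close> on \<open>I\<close> for the
  pairs \<open>(x, 1 - x)\<close> and \<open>(x + 1/q mod 1, x)\<close>, which the bound propagates from time 0.
  Clusters and a.e. injectivity concern pairs \<open>(x, y)\<close> in \<open>I \<times> I\<close>: the bound keeps \<open>u t\<close>
  constant where \<open>u 0\<close> is, and, applied backwards in time as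
  \<open>\<bar>u 0 x - u 0 y\<bar> \<le> k \<bar>u t x - u t y\<bar>\<close>, transfers injectivity from \<open>u 0\<close> to \<open>u t\<close>.
\<close>

lemma lipschitz_on_case_prod_abs_le:
  fixes f :: "real \<Rightarrow> real \<Rightarrow> real"
  assumes "L-lipschitz_on UNIV (\<lambda>(a, b). f a b)"
  shows "\<bar>f a b - f a' b'\<bar> \<le> L * (\<bar>a - a'\<bar> + \<bar>b - b'\<bar>)"
proof -
  have "dist (a, b) (a', b') \<le> \<bar>a - a'\<bar> + \<bar>b - b'\<bar>"
    unfolding dist_Pair_Pair dist_real_def
    by (metis real_sqrt_abs real_sqrt_le_mono sqrt_sum_squares_le_sum_abs power2_abs)
  with lipschitz_onD[OF assms, of "(a, b)" "(a', b')"] lipschitz_on_nonneg[OF assms]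
  show ?thesis
    by (simp add: dist_real_def) (meson mult_left_mono order_trans)
qed

lemma lipschitz_on_case_prod_left:
  fixes f :: "real \<Rightarrow> real \<Rightarrow> real"
  assumes "L-lipschitz_on UNIV (\<lambda>(a, b). f a b)"
  shows "L-lipschitz_on UNIV (\<lambda>b. f a b)"
  using lipschitz_on_case_prod_abs_le[OF assms, of a _ a] lipschitz_on_nonneg[OF assms]
  by (intro lipschitz_onI) (auto simp: dist_real_def)

lemma abs_diff_step_le:
  fixes a b qa qb Fa Fb h C :: real
  assumes "\<bar>Fa - Fb\<bar> \<le> C * \<bar>a - b\<bar>"
  shows "\<bar>\<bar>a + h * (qa + Fa) - (b + h * (qb + Fb))\<bar> - \<bar>a - b\<bar>\<bar> \<le> \<bar>h\<bar> * (C * \<bar>a - b\<bar> + \<bar>qa\<bar> + \<bar>qb\<bar>)"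
proof -
  have "\<bar>\<bar>a + h * (qa + Fa) - (b + h * (qb + Fb))\<bar> - \<bar>a - b\<bar>\<bar> \<le> \<bar>h * ((qa - qb) + (Fa - Fb))\<bar>"
    using abs_triangle_ineq3[of "a + h * (qa + Fa) - (b + h * (qb + Fb))" "a - b"]
    by (simp add: algebra_simps)
  also have "\<dots> \<le> \<bar>h\<bar> * (C * \<bar>a - b\<bar> + \<bar>qa\<bar> + \<bar>qb\<bar>)"
    unfolding abs_mult using assms by (intro mult_left_mono) linarith+
  finally show ?thesis .
qed

section \<open>Gronwall-type bound from local growth\<close>

lemma isCont_of_local_growth:
  fixes D :: "real \<Rightarrow> real"
  assumes "\<And>e. 0 < e \<Longrightarrow> \<forall>\<^sub>F h in at 0. \<bar>D (t + h) - D t\<bar> \<le> \<bar>h\<bar> * (C * D t + e)"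
  shows "isCont D t"
proof -
  have "\<forall>\<^sub>F h in at 0. norm (D (t + h) - D t) \<le> \<bar>h\<bar> * \<bar>C * D t + 1\<bar>"
    using assms[OF zero_less_one] by eventually_elim (auto intro: order_trans[OF _ mult_left_mono])
  moreover have "((\<lambda>h. \<bar>h\<bar> * \<bar>C * D t + 1\<bar>) \<longlongrightarrow> 0) (at (0::real))"
    by (intro tendsto_eq_intros) auto
  ultimately have "((\<lambda>h. D (t + h) - D t) \<longlongrightarrow> 0) (at 0)"
    by (rule Lim_null_comparison)
  then show ?thesis
    by (simp add: isCont_iff LIM_zero_iff)
qed

lemma le_by_right_continuation:
  fixes D \<psi> :: "real \<Rightarrow> real"
  assumes "D t \<le> \<psi> t" and "t \<le> s"
    and cont: "\<And>r. isCont D r" "\<And>r. isCont \<psi> r"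
    and step: "\<And>r. t \<le> r \<Longrightarrow> D r \<le> \<psi> r \<Longrightarrow> \<exists>\<delta>>0. \<forall>h. 0 < h \<longrightarrow> h < \<delta> \<longrightarrow> D (r + h) \<le> \<psi> (r + h)"
  shows "D s \<le> \<psi> s"
proof (rule ccontr)
  define A where "A = {r \<in> {t..s}. \<psi> r < D r}"
  define s0 where "s0 = Inf A"
  assume "\<not> ?thesis"
  then have "s \<in> A"
    using \<open>t \<le> s\<close> by (auto simp: A_def)
  have s0_le: "s0 \<le> r" if "r \<in> A" for r
    unfolding s0_def by (rule cInf_lower[OF that]) (auto simp: A_def intro: bdd_belowI[of _ t])
  have "t \<le> s0"
    unfolding s0_def using \<open>s \<in> A\<close> by (intro cInf_greatest) (auto simp: A_def)
  have "D s0 \<le> \<psi> s0"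
  proof (cases "s0 = t")
    case False
    then have "t < s0" using \<open>t \<le> s0\<close> by simp
    have "D r \<le> \<psi> r" if "t < r" "r < s0" for r
      using s0_le[of r] s0_le[OF \<open>s \<in> A\<close>] that by (force simp: A_def)
    then have "\<forall>\<^sub>F r in at_left s0. D r \<le> \<psi> r"
      using eventually_at_left_real[OF \<open>t < s0\<close>] by (auto elim: eventually_mono)
    moreover have "(D \<longlongrightarrow> D s0) (at_left s0)" "(\<psi> \<longlongrightarrow> \<psi> s0) (at_left s0)"
      using cont by (simp_all add: isCont_def filterlim_at_split)
    ultimately show ?thesis
      by (intro tendsto_le[OF trivial_limit_at_left_real]) auto
  qed (use \<open>D t \<le> \<psi> t\<close> in simp)
  then obtain \<delta> where "0 < \<delta>" and \<delta>: "\<And>h. 0 < h \<Longrightarrow> h < \<delta> \<Longrightarrow> D (s0 + h) \<le> \<psi> (s0 + h)"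
    using step[OF \<open>t \<le> s0\<close>] by blast
  have "s0 + \<delta> \<le> r" if "r \<in> A" for r
  proof -
    have "s0 < r"
      using that s0_le[OF that] \<open>D s0 \<le> \<psi> s0\<close> by (cases "r = s0") (auto simp: A_def)
    then show ?thesis
      using \<delta>[of "r - s0"] that by (force simp: A_def)
  qed
  then have "s0 + \<delta> \<le> s0"
    unfolding s0_def using \<open>s \<in> A\<close> by (intro cInf_greatest) auto
  then show False using \<open>0 < \<delta>\<close> by simp
qed

lemma exp_barrier_step:
  fixes d d' P C e h :: real
  assumes "d \<le> P" "0 \<le> C" "0 \<le> h" "0 \<le> e" "e \<le> P" "d' \<le> d + h * (C * d + e)"
  shows "d' \<le> P * exp ((C + 1) * h)"
proof -
  have "d' \<le> P + h * (C * P + P)"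
    using assms by (smt (verit) mult_left_mono)
  also have "\<dots> = P * (1 + (C + 1) * h)"
    by (simp add: algebra_simps)
  also have "\<dots> \<le> P * exp ((C + 1) * h)"
    using assms by (intro mult_left_mono exp_ge_add_one_self) auto
  finally show ?thesis .
qed

lemma local_growth_exp_bound_forward:
  fixes D :: "real \<Rightarrow> real"
  assumes nonneg: "\<And>r. 0 \<le> D r" and C: "0 \<le> C"
    and growth: "\<And>r e. 0 < e \<Longrightarrow> \<forall>\<^sub>F h in at 0. \<bar>D (r + h) - D r\<bar> \<le> \<bar>h\<bar> * (C * D r + e)"
    and "t \<le> s" and e: "0 < e"
  shows "D s \<le> (D t + e) * exp ((C + 1) * (s - t))"
proof -
  define \<psi> where "\<psi> r = (D t + e) * exp ((C + 1) * (r - t))" for r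
  have "D s \<le> \<psi> s"
  proof (rule le_by_right_continuation[OF _ \<open>t \<le> s\<close>])
    show "D t \<le> \<psi> t"
      using e by (simp add: \<psi>_def)
    show "isCont D r" for r
      by (rule isCont_of_local_growth[OF growth])
    show "isCont \<psi> r" for r
      unfolding \<psi>_def by (intro continuous_intros)
    fix r assume "t \<le> r" "D r \<le> \<psi> r"
    have "(D t + e) * 1 \<le> \<psi> r"
      unfolding \<psi>_def using \<open>t \<le> r\<close> C nonneg[of t] e by (intro mult_left_mono) auto
    then have "e / 2 \<le> \<psi> r"
      using nonneg[of t] e by simp
    have "0 < e / 2" using e by simp
    from growth[OF this, of r] obtain \<delta> where "0 < \<delta>"
      and \<delta>: "\<And>h. h \<noteq> 0 \<Longrightarrow> dist h 0 < \<delta> \<Longrightarrow> \<bar>D (r + h) - D r\<bar> \<le> \<bar>h\<bar> * (C * D r + e / 2)"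
      unfolding eventually_at by blast
    have "D (r + h) \<le> \<psi> (r + h)" if "0 < h" "h < \<delta>" for h
    proof -
      have "D (r + h) - D r \<le> h * (C * D r + e / 2)"
        using \<delta>[of h] that by (simp add: dist_real_def)
      then have "D (r + h) \<le> \<psi> r * exp ((C + 1) * h)"
        using \<open>D r \<le> \<psi> r\<close> C that \<open>e / 2 \<le> \<psi> r\<close> e by (intro exp_barrier_step[of _ _ _ _ "e / 2"]) auto
      also have "\<dots> = \<psi> (r + h)"
        by (simp add: \<psi>_def mult.assoc flip: exp_add) (simp add: algebra_simps)
      finally show ?thesis .
    qed
    with \<open>0 < \<delta>\<close> show "\<exists>\<delta>>0. \<forall>h. 0 < h \<longrightarrow> h < \<delta> \<longrightarrow> D (r + h) \<le> \<psi> (r + h)"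
      by blast
  qed
  then show ?thesis by (simp add: \<psi>_def)
qed

lemma local_growth_exp_bound:
  fixes D :: "real \<Rightarrow> real"
  assumes nonneg: "\<And>r. 0 \<le> D r" and C: "0 \<le> C"
    and growth: "\<And>r e. 0 < e \<Longrightarrow> \<forall>\<^sub>F h in at 0. \<bar>D (r + h) - D r\<bar> \<le> \<bar>h\<bar> * (C * D r + e)"
  shows "D s \<le> D t * exp ((C + 1) * \<bar>s - t\<bar>)"
proof -
  have forward: "D' s' \<le> D' t' * exp ((C + 1) * (s' - t'))"
    if "\<And>r. 0 \<le> D' r"
      and "\<And>r e. 0 < e \<Longrightarrow> \<forall>\<^sub>F h in at 0. \<bar>D' (r + h) - D' r\<bar> \<le> \<bar>h\<bar> * (C * D' r + e)"
      and "t' \<le> s'"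
    for D' :: "real \<Rightarrow> real" and s' t'
  proof (rule field_le_epsilon)
    fix e :: real assume "0 < e"
    define E where "E = exp ((C + 1) * (s' - t'))"
    have "0 < E" by (simp add: E_def)
    have "D' s' \<le> (D' t' + e / E) * E"
      using local_growth_exp_bound_forward[OF that(1) C that(2-3), of "e / E"] \<open>0 < e\<close> \<open>0 < E\<close>
      by (simp add: E_def)
    also have "\<dots> = D' t' * E + e"
      using \<open>0 < E\<close> by (simp add: field_simps)
    finally show "D' s' \<le> D' t' * E + e" .
  qed
  show ?thesis
  proof (cases "t \<le> s")
    case True
    then show ?thesis using forward[OF nonneg growth] by simp
  next
    case False
    have "\<forall>\<^sub>F h in at 0. \<bar>D (- (r + h)) - D (- r)\<bar> \<le> \<bar>h\<bar> * (C * D (- r) + e)" if "0 < e" for r e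
    proof -
      have "\<forall>\<^sub>F h in filtermap uminus (at 0). \<bar>D (- r + h) - D (- r)\<bar> \<le> \<bar>h\<bar> * (C * D (- r) + e)"
        using growth[OF that, of "- r"] filtermap_at_minus[of "0::real"] by simp
      then show ?thesis
        unfolding eventually_filtermap by (rule eventually_mono) (simp add: add.commute)
    qed
    from forward[of "\<lambda>r. D (- r)", OF nonneg this, of "- t" "- s"] False
    show ?thesis by simp
  qed
qed

lemma (in finite_measure) integrable_lipschitz_comp:
  fixes h :: "real \<Rightarrow> real"
  assumes h: "L-lipschitz_on UNIV h" and v: "integrable M v"
  shows "integrable M (\<lambda>x. h (v x))"
proof (rule Bochner_Integration.integrable_bound)
  show "integrable M (\<lambda>x. \<bar>h 0\<bar> + L * \<bar>v x\<bar>)"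
    using v by auto
  show "(\<lambda>x. h (v x)) \<in> borel_measurable M"
    using v lipschitz_on_continuous_on[OF h]
    by (metis borel_measurable_continuous_onI borel_measurable_integrable measurable_compose)
  have "\<bar>h (v x) - h 0\<bar> \<le> L * \<bar>v x\<bar>" for x
    using lipschitz_onD[OF h, of "v x" 0] by (simp add: dist_real_def)
  then show "AE x in M. norm (h (v x)) \<le> norm (\<bar>h 0\<bar> + L * \<bar>v x\<bar>)"
    using lipschitz_on_nonneg[OF h] by (intro AE_I2) (smt (verit) real_norm_def zero_le_mult_iff)
qed

lemma AE_le_if_integral_indicator_le:
  fixes f g :: "'a \<Rightarrow> real"
  assumes f: "integrable M f" and g: "integrable M g"
    and le: "\<And>E. E \<in> sets M \<Longrightarrow> (\<integral>x. indicator E x * f x \<partial>M) \<le> (\<integral>x. indicator E x * g x \<partial>M)"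
  shows "AE x in M. f x \<le> g x"
proof -
  define E where "E = {x \<in> space M. g x < f x}"
  have E: "E \<in> sets M"
    using borel_measurable_integrable[OF f] borel_measurable_integrable[OF g]
    unfolding E_def by measurable
  have int: "integrable M (\<lambda>x. indicator E x * (f x - g x))"
    using integrable_real_mult_indicator[OF E Bochner_Integration.integrable_diff[OF f g]]
    by (simp add: mult.commute)
  have "(\<integral>x. indicator E x * (f x - g x) \<partial>M) \<le> 0"
    using le[OF E] integrable_real_mult_indicator[OF E f] integrable_real_mult_indicator[OF E g]
    by (simp add: right_diff_distrib mult.commute[of "indicator E _"])
  moreover have nonneg: "AE x in M. 0 \<le> indicator E x * (f x - g x)"
    by (intro AE_I2) (auto simp: E_def indicator_def)
  ultimately have "(\<integral>x. indicator E x * (f x - g x) \<partial>M) = 0"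
    using integral_nonneg_AE[OF nonneg] by linarith
  then have "AE x in M. indicator E x * (f x - g x) = 0"
    using integral_nonneg_eq_0_iff_AE[OF int nonneg] by simp
  then show ?thesis
    by (rule AE_mp) (intro AE_I2, auto simp: E_def indicator_def)
qed

lemma AE_emeasure_preimage_ball_nonzero:
  fixes v :: "'a \<Rightarrow> real"
  assumes v: "v \<in> borel_measurable M"
  shows "AE x in M. \<forall>\<epsilon>>0. emeasure M {y \<in> space M. \<bar>v y - v x\<bar> < \<epsilon>} \<noteq> 0"
proof -
  define S where "S r s = {y \<in> space M. real_of_rat r < v y \<and> v y < real_of_rat s}" for r s
  have S: "S r s \<in> sets M" for r s
    unfolding S_def using v by measurable
  have "AE x in M. real_of_rat r < v x \<and> v x < real_of_rat s \<longrightarrow> emeasure M (S r s) \<noteq> 0" for r s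
  proof (cases "emeasure M (S r s) = 0")
    case True
    then have "AE x in M. x \<notin> S r s"
      using S by (simp add: AE_iff_null_sets[symmetric] null_sets_def)
    then show ?thesis
      by (rule AE_mp) (intro AE_I2, auto simp: S_def)
  qed simp
  then have "AE x in M. \<forall>r s. real_of_rat r < v x \<and> v x < real_of_rat s \<longrightarrow> emeasure M (S r s) \<noteq> 0"
    by (simp add: AE_all_countable)
  then show ?thesis
  proof (rule AE_mp, intro AE_I2 impI allI)
    fix x and \<epsilon> :: real
    assume x: "x \<in> space M" and "0 < \<epsilon>"
      and nonzero: "\<forall>r s. real_of_rat r < v x \<and> v x < real_of_rat s \<longrightarrow> emeasure M (S r s) \<noteq> 0"
    obtain r where r: "v x - \<epsilon> < real_of_rat r" "real_of_rat r < v x"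
      using of_rat_dense[of "v x - \<epsilon>" "v x"] \<open>0 < \<epsilon>\<close> by auto
    obtain s where s: "v x < real_of_rat s" "real_of_rat s < v x + \<epsilon>"
      using of_rat_dense[of "v x" "v x + \<epsilon>"] \<open>0 < \<epsilon>\<close> by auto
    have "S r s \<subseteq> {y \<in> space M. \<bar>v y - v x\<bar> < \<epsilon>}"
      using r s by (auto simp: S_def)
    moreover have "{y \<in> space M. \<bar>v y - v x\<bar> < \<epsilon>} \<in> sets M"
      using v by measurable
    ultimately have "emeasure M (S r s) \<le> emeasure M {y \<in> space M. \<bar>v y - v x\<bar> < \<epsilon>}"
      by (rule emeasure_mono)
    then show "emeasure M {y \<in> space M. \<bar>v y - v x\<bar> < \<epsilon>} \<noteq> 0"
      using nonzero r s by auto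
  qed
qed

lemma AE_imp_ex_in_nonnull:
  assumes "AE x in M. P x" and "Y \<in> sets M" and "emeasure M Y \<noteq> 0"
  shows "\<exists>y\<in>Y. P y"
proof (rule ccontr)
  assume "\<not> ?thesis"
  with assms(1) have "AE y in M. y \<notin> Y"
    by (auto elim: eventually_mono)
  with assms(2,3) show False
    by (simp add: AE_iff_null_sets[symmetric] null_sets_def)
qed

lemma eq_if_AE_pairwise_le_near:
  fixes v w :: "'a \<Rightarrow> real"
  assumes w: "w \<in> borel_measurable M" and "0 < k" and "w x = w x'"
    and bound: "AE y in M. \<bar>v x - v y\<bar> \<le> k * \<bar>w x - w y\<bar>" "AE y in M. \<bar>v x' - v y\<bar> \<le> k * \<bar>w x' - w y\<bar>"
    and near: "\<And>\<epsilon>. 0 < \<epsilon> \<Longrightarrow> emeasure M {y \<in> space M. \<bar>w y - w x'\<bar> < \<epsilon>} \<noteq> 0"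
  shows "v x = v x'"
proof (rule ccontr)
  assume "v x \<noteq> v x'"
  define \<epsilon> where "\<epsilon> = \<bar>v x - v x'\<bar> / (2 * k)"
  have "0 < \<epsilon>"
    using \<open>v x \<noteq> v x'\<close> \<open>0 < k\<close> by (simp add: \<epsilon>_def)
  have "{y \<in> space M. \<bar>w y - w x'\<bar> < \<epsilon>} \<in> sets M"
    using w by measurable
  from AE_imp_ex_in_nonnull[OF AE_conjI[OF bound] this near[OF \<open>0 < \<epsilon>\<close>]]
  obtain y where "\<bar>w y - w x'\<bar> < \<epsilon>"
    and y: "\<bar>v x - v y\<bar> \<le> k * \<bar>w x' - w y\<bar>" "\<bar>v x' - v y\<bar> \<le> k * \<bar>w x' - w y\<bar>"
    using \<open>w x = w x'\<close> by auto
  have "\<bar>v x - v x'\<bar> \<le> 2 * k * \<bar>w x' - w y\<bar>"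
    using y by linarith
  also have "\<dots> < 2 * k * \<epsilon>"
    using \<open>\<bar>w y - w x'\<bar> < \<epsilon>\<close> \<open>0 < k\<close> by (simp add: abs_minus_commute)
  also have "\<dots> = \<bar>v x - v x'\<bar>"
    using \<open>0 < k\<close> by (simp add: \<epsilon>_def)
  finally show False by simp
qed

lemma inj_on_AE_if_pairwise_AE_le:
  fixes v w :: "'a \<Rightarrow> real"
  assumes w: "w \<in> borel_measurable M" and "0 < k"
    and bound: "AE x in M. AE y in M. \<bar>v x - v y\<bar> \<le> k * \<bar>w x - w y\<bar>"
    and N: "N \<in> null_sets M" and inj: "inj_on v (space M - N)"
  shows "\<exists>N' \<in> null_sets M. inj_on w (space M - N')"
proof -
  have "AE x in M. (AE y in M. \<bar>v x - v y\<bar> \<le> k * \<bar>w x - w y\<bar>)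
      \<and> (\<forall>\<epsilon>>0. emeasure M {y \<in> space M. \<bar>w y - w x\<bar> < \<epsilon>} \<noteq> 0)"
    using bound AE_emeasure_preimage_ball_nonzero[OF w] by eventually_elim simp
  then obtain N' where N': "N' \<in> null_sets M"
    and good: "\<And>x. x \<in> space M - N' \<Longrightarrow> (AE y in M. \<bar>v x - v y\<bar> \<le> k * \<bar>w x - w y\<bar>)
      \<and> (\<forall>\<epsilon>>0. emeasure M {y \<in> space M. \<bar>w y - w x\<bar> < \<epsilon>} \<noteq> 0)"
    by (rule AE_E3) blast
  have "inj_on w (space M - (N \<union> N'))"
  proof (rule inj_onI)
    fix x x' assume x: "x \<in> space M - (N \<union> N')" and x': "x' \<in> space M - (N \<union> N')"
      and "w x = w x'"
    then have "v x = v x'"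
      using good[of x] good[of x'] x x' by (intro eq_if_AE_pairwise_le_near[OF w \<open>0 < k\<close> \<open>w x = w x'\<close>]) auto
    then show "x = x'"
      using inj x x' by (auto dest: inj_onD)
  qed
  moreover have "N \<union> N' \<in> null_sets M"
    using N N' by auto
  ultimately show ?thesis by blast
qed

lemma AE_eq_const_on_if_AE_pairwise_eq:
  assumes "AE x in M. AE y in M. x \<in> A \<and> y \<in> A \<longrightarrow> w x = w y"
  shows "\<exists>c. AE x in M. x \<in> A \<longrightarrow> w x = c"
proof (cases "\<exists>x\<in>A. AE y in M. y \<in> A \<longrightarrow> w x = w y")
  case True
  then obtain x where "AE y in M. y \<in> A \<longrightarrow> w x = w y" by blast
  then have "AE y in M. y \<in> A \<longrightarrow> w y = w x" by eventually_elim auto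
  then show ?thesis by blast
next
  case False
  from assms have "AE x in M. x \<notin> A"
    by eventually_elim (use False in auto)
  then show ?thesis
    by (auto elim: eventually_mono)
qed

lemma finite_measure_II: "finite_measure II"
  by (rule finite_measure_lebesgue_on) auto

lemma emeasure_II_space [simp]: "emeasure II {0..1} = 1"
  by (simp add: emeasure_restrict_space)

lemma measure_II_space [simp]: "measure II {0..1} = 1"
  by (simp add: measure_restrict_space)

lemma pair_sigma_finite_II: "pair_sigma_finite II II"
proof -
  interpret finite_measure II by (rule finite_measure_II)
  show ?thesis by unfold_locales
qed

lemma lebesgue_measurable_affine:
  "c \<noteq> 0 \<Longrightarrow> (\<lambda>x::real. t + c * x) \<in> lebesgue \<rightarrow>\<^sub>M lebesgue"
  using lebesgue_affine_measurable[where c="\<lambda>x::real. c" and t=t] by force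

lemma lebesgue_measurable_translation: "(\<lambda>x::real. t + x) \<in> lebesgue \<rightarrow>\<^sub>M lebesgue"
  using lebesgue_measurable_affine[of 1 t] by simp

lemma nn_integral_II_affine:
  fixes f :: "real \<Rightarrow> ennreal"
  assumes "f \<in> borel_measurable II" and "c \<noteq> 0"
  shows "(\<integral>\<^sup>+x. f (t + c * x) * indicator {0..1} (t + c * x) \<partial>lebesgue)
       = ennreal (1 / \<bar>c\<bar>) * (\<integral>\<^sup>+x. f x \<partial>II)"
proof -
  have "(\<lambda>x. f x * indicator {0..1} x) \<in> borel_measurable lebesgue"
    using assms(1) by (simp add: borel_measurable_restrict_space_iff_ennreal)
  have "(\<integral>\<^sup>+x. f x \<partial>II) = (\<integral>\<^sup>+x. f x * indicator {0..1} x \<partial>lebesgue)"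
    by (simp add: nn_integral_restrict_space)
  also have "\<dots> = ennreal \<bar>c\<bar> * (\<integral>\<^sup>+x. f (t + c * x) * indicator {0..1} (t + c * x) \<partial>lebesgue)"
    by (rule nn_integral_real_affine_lebesgue) fact+
  finally show ?thesis
    using \<open>c \<noteq> 0\<close> by (simp add: mult.assoc[symmetric] ennreal_mult[symmetric])
qed

lemma AE_II_less_1: "AE x in II. x < 1"
proof -
  have "AE x in lebesgue. x \<noteq> (1::real)"
    using AE_lborel_singleton[of "1::real"] by (simp add: AE_completion)
  then show ?thesis
    by (subst AE_restrict_space_iff) (auto elim: AE_mp)
qed

text \<open>Agrees with \<open>x \<mapsto> frac (x + a)\<close> on \<open>[0, 1)\<close>. The piecewise affine form matters: \<open>II\<close>
  carries the Lebesgue \<open>\<sigma>\<close>-algebra, which affine maps, unlike general Borel maps, pull back to itself.\<close>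
definition rotation01 :: "real \<Rightarrow> real \<Rightarrow> real" where
  "rotation01 a x = (if x < 1 - a then x + a else x + a - 1)"

lemma frac_add_eq_rotation01:
  "0 \<le> a \<Longrightarrow> a \<le> 1 \<Longrightarrow> 0 \<le> x \<Longrightarrow> x < 1 \<Longrightarrow> frac (x + a) = rotation01 a x"
  by (auto simp: rotation01_def frac_unique_iff)

lemma rotation01_in_unit_interval:
  "0 \<le> a \<Longrightarrow> a \<le> 1 \<Longrightarrow> x \<in> {0..1} \<Longrightarrow> rotation01 a x \<in> {0..1}"
  by (auto simp: rotation01_def)

lemma rotation01_measurable:
  assumes "0 \<le> a" "a \<le> 1"
  shows "rotation01 a \<in> II \<rightarrow>\<^sub>M II"
proof -
  have "rotation01 a = (\<lambda>x. if x \<in> {..<1 - a} then a + x else (a - 1) + x)"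
    by (auto simp: rotation01_def fun_eq_iff)
  moreover have "\<dots> \<in> lebesgue \<rightarrow>\<^sub>M lebesgue"
    by (rule measurable_If_set) (simp_all add: lebesgue_measurable_translation)
  ultimately have "rotation01 a \<in> lebesgue \<rightarrow>\<^sub>M lebesgue"
    by simp
  then show ?thesis
    by (rule measurable_restrict_space3) (use rotation01_in_unit_interval[OF assms] in auto)
qed

section \<open>Sampling maps with bounded pull-back on L1\<close>

definition L1_comp_bounded :: "'m measure \<Rightarrow> real \<Rightarrow> ('m \<Rightarrow> real) \<Rightarrow> bool" where
  "L1_comp_bounded M c p \<longleftrightarrow> 0 \<le> c \<and> p \<in> M \<rightarrow>\<^sub>M II \<and>
     (\<forall>\<phi> \<in> borel_measurable II.
        (\<integral>\<^sup>+\<omega>. ennreal \<bar>\<phi> (p \<omega>)\<bar> \<partial>M) \<le> ennreal c * (\<integral>\<^sup>+x. ennreal \<bar>\<phi> x\<bar> \<partial>II))"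

lemma L1_comp_boundedI:
  assumes "0 \<le> c" "p \<in> M \<rightarrow>\<^sub>M II"
    and "\<And>\<phi>. \<phi> \<in> borel_measurable II \<Longrightarrow>
      (\<integral>\<^sup>+\<omega>. ennreal \<bar>\<phi> (p \<omega>)\<bar> \<partial>M) \<le> ennreal c * (\<integral>\<^sup>+x. ennreal \<bar>\<phi> x\<bar> \<partial>II)"
  shows "L1_comp_bounded M c p"
  using assms by (simp add: L1_comp_bounded_def)

lemma L1_comp_bounded_integrable:
  assumes p: "L1_comp_bounded M c p" and \<phi>: "integrable II \<phi>"
  shows "integrable M (\<lambda>\<omega>. \<phi> (p \<omega>))"
    and "(\<integral>\<omega>. \<bar>\<phi> (p \<omega>)\<bar> \<partial>M) \<le> c * (\<integral>x. \<bar>\<phi> x\<bar> \<partial>II)"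
proof -
  have "0 \<le> c" and p_meas: "p \<in> M \<rightarrow>\<^sub>M II" and \<phi>_meas: "\<phi> \<in> borel_measurable II"
    using p \<phi> by (auto simp: L1_comp_bounded_def)
  have meas: "(\<lambda>\<omega>. \<phi> (p \<omega>)) \<in> borel_measurable M"
    using measurable_compose[OF p_meas \<phi>_meas] .
  have "(\<integral>\<^sup>+\<omega>. ennreal \<bar>\<phi> (p \<omega>)\<bar> \<partial>M) \<le> ennreal c * (\<integral>\<^sup>+x. ennreal \<bar>\<phi> x\<bar> \<partial>II)"
    using p \<phi>_meas by (simp add: L1_comp_bounded_def)
  also have "\<dots> = ennreal (c * (\<integral>x. \<bar>\<phi> x\<bar> \<partial>II))"
    using \<phi> \<open>0 \<le> c\<close> by (simp add: nn_integral_eq_integral ennreal_mult)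
  finally have bound: "(\<integral>\<^sup>+\<omega>. ennreal \<bar>\<phi> (p \<omega>)\<bar> \<partial>M) \<le> ennreal (c * (\<integral>x. \<bar>\<phi> x\<bar> \<partial>II))" .
  then show int: "integrable M (\<lambda>\<omega>. \<phi> (p \<omega>))"
    using meas le_less_trans[OF bound ennreal_less_top] by (simp add: integrable_iff_bounded)
  show "(\<integral>\<omega>. \<bar>\<phi> (p \<omega>)\<bar> \<partial>M) \<le> c * (\<integral>x. \<bar>\<phi> x\<bar> \<partial>II)"
    using bound \<open>0 \<le> c\<close> by (simp add: nn_integral_eq_integral[OF integrable_abs[OF int]])
qed

lemma L1_comp_bounded_restrict_space:
  assumes p: "L1_comp_bounded M c p" and E: "E \<in> sets M"
  shows "L1_comp_bounded (restrict_space M E) c p"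
proof (rule L1_comp_boundedI)
  show "0 \<le> c" and "p \<in> restrict_space M E \<rightarrow>\<^sub>M II"
    using p by (auto simp: L1_comp_bounded_def intro: measurable_restrict_space1)
  fix \<phi> :: "real \<Rightarrow> real" assume "\<phi> \<in> borel_measurable II"
  have "(\<integral>\<^sup>+\<omega>. ennreal \<bar>\<phi> (p \<omega>)\<bar> \<partial>restrict_space M E)
      = (\<integral>\<^sup>+\<omega>. ennreal \<bar>\<phi> (p \<omega>)\<bar> * indicator E \<omega> \<partial>M)"
    using E by (simp add: nn_integral_restrict_space)
  also have "\<dots> \<le> (\<integral>\<^sup>+\<omega>. ennreal \<bar>\<phi> (p \<omega>)\<bar> \<partial>M)"
    by (intro nn_integral_mono) (simp add: indicator_def)
  also have "\<dots> \<le> ennreal c * (\<integral>\<^sup>+x. ennreal \<bar>\<phi> x\<bar> \<partial>II)"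
    using p \<open>\<phi> \<in> borel_measurable II\<close> by (simp add: L1_comp_bounded_def)
  finally show "(\<integral>\<^sup>+\<omega>. ennreal \<bar>\<phi> (p \<omega>)\<bar> \<partial>restrict_space M E) \<le> \<dots>" .
qed

lemma L1_comp_bounded_id: "L1_comp_bounded II 1 (\<lambda>x. x)"
  by (rule L1_comp_boundedI) auto

lemma L1_comp_bounded_fst: "L1_comp_bounded (II \<Otimes>\<^sub>M II) 1 fst"
  and L1_comp_bounded_snd: "L1_comp_bounded (II \<Otimes>\<^sub>M II) 1 snd"
proof -
  interpret finite_measure II by (rule finite_measure_II)
  show "L1_comp_bounded (II \<Otimes>\<^sub>M II) 1 fst"
  proof (rule L1_comp_boundedI)
    fix \<phi> :: "real \<Rightarrow> real" assume [measurable]: "\<phi> \<in> borel_measurable II"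
    have meas: "(\<lambda>\<omega>. ennreal \<bar>\<phi> (fst \<omega>)\<bar>) \<in> borel_measurable (II \<Otimes>\<^sub>M II)"
      by measurable
    show "(\<integral>\<^sup>+\<omega>. ennreal \<bar>\<phi> (fst \<omega>)\<bar> \<partial>(II \<Otimes>\<^sub>M II)) \<le> ennreal 1 * (\<integral>\<^sup>+x. ennreal \<bar>\<phi> x\<bar> \<partial>II)"
      using nn_integral_fst[OF meas] by simp
  qed auto
  show "L1_comp_bounded (II \<Otimes>\<^sub>M II) 1 snd"
  proof (rule L1_comp_boundedI)
    fix \<phi> :: "real \<Rightarrow> real" assume [measurable]: "\<phi> \<in> borel_measurable II"
    have meas: "(\<lambda>\<omega>. ennreal \<bar>\<phi> (snd \<omega>)\<bar>) \<in> borel_measurable (II \<Otimes>\<^sub>M II)"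
      by measurable
    show "(\<integral>\<^sup>+\<omega>. ennreal \<bar>\<phi> (snd \<omega>)\<bar> \<partial>(II \<Otimes>\<^sub>M II)) \<le> ennreal 1 * (\<integral>\<^sup>+x. ennreal \<bar>\<phi> x\<bar> \<partial>II)"
      using pair_sigma_finite.nn_integral_snd[OF pair_sigma_finite_II meas] by simp
  qed auto
qed

lemma L1_comp_bounded_reflection: "L1_comp_bounded II 1 (\<lambda>x. 1 - x)"
proof (rule L1_comp_boundedI)
  have "(\<lambda>x::real. 1 + (- 1) * x) \<in> lebesgue \<rightarrow>\<^sub>M lebesgue"
    by (rule lebesgue_measurable_affine) simp
  then have "(\<lambda>x::real. 1 - x) \<in> lebesgue \<rightarrow>\<^sub>M lebesgue"
    by simp
  then show "(\<lambda>x. 1 - x) \<in> II \<rightarrow>\<^sub>M II"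
    by (rule measurable_restrict_space3) auto
  fix \<phi> :: "real \<Rightarrow> real" assume "\<phi> \<in> borel_measurable II"
  then have \<phi>: "(\<lambda>x. ennreal \<bar>\<phi> x\<bar>) \<in> borel_measurable II"
    by measurable
  have "(\<integral>\<^sup>+x. ennreal \<bar>\<phi> (1 - x)\<bar> \<partial>II)
      = (\<integral>\<^sup>+x. ennreal \<bar>\<phi> (1 + (- 1) * x)\<bar> * indicator {0..1} (1 + (- 1) * x) \<partial>lebesgue)"
    by (simp add: nn_integral_restrict_space) (intro nn_integral_cong; auto split: split_indicator)
  also have "\<dots> = ennreal (1 / \<bar>- 1\<bar>) * (\<integral>\<^sup>+x. ennreal \<bar>\<phi> x\<bar> \<partial>II)"
    by (rule nn_integral_II_affine[OF \<phi>]) simp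
  finally show "(\<integral>\<^sup>+x. ennreal \<bar>\<phi> (1 - x)\<bar> \<partial>II) \<le> ennreal 1 * (\<integral>\<^sup>+x. ennreal \<bar>\<phi> x\<bar> \<partial>II)"
    by simp
qed simp

lemma L1_comp_bounded_rotation01:
  assumes a: "0 \<le> a" "a \<le> 1"
  shows "L1_comp_bounded II 2 (rotation01 a)"
proof (rule L1_comp_boundedI)
  show "rotation01 a \<in> II \<rightarrow>\<^sub>M II"
    using a by (rule rotation01_measurable)
  fix \<phi> :: "real \<Rightarrow> real" assume "\<phi> \<in> borel_measurable II"
  then have \<phi>: "(\<lambda>x. ennreal \<bar>\<phi> x\<bar>) \<in> borel_measurable II"
    by measurable
  define \<psi> where "\<psi> x = ennreal \<bar>\<phi> x\<bar> * indicator {0..1} x" for x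
  have \<psi>_meas: "\<psi> \<in> borel_measurable lebesgue"
    using borel_measurable_restrict_space_iff_ennreal[of "{0..1}" lebesgue "\<lambda>x. ennreal \<bar>\<phi> x\<bar>"] \<phi>
    by (simp add: \<psi>_def[abs_def])
  have "(\<integral>\<^sup>+x. ennreal \<bar>\<phi> (rotation01 a x)\<bar> \<partial>II)
      = (\<integral>\<^sup>+x. ennreal \<bar>\<phi> (rotation01 a x)\<bar> * indicator {0..1} x \<partial>lebesgue)"
    by (simp add: nn_integral_restrict_space)
  \<comment> \<open>Bounding the two affine pieces separately costs the factor 2.\<close>
  also have "\<dots> \<le> (\<integral>\<^sup>+x. \<psi> (a + x) + \<psi> ((a - 1) + x) \<partial>lebesgue)"
  proof (rule nn_integral_mono)
    fix x :: real
    show "ennreal \<bar>\<phi> (rotation01 a x)\<bar> * indicator {0..1} x \<le> \<psi> (a + x) + \<psi> ((a - 1) + x)"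
    proof (cases "x \<in> {0..1}")
      case True
      then have "ennreal \<bar>\<phi> (rotation01 a x)\<bar> * indicator {0..1} x = \<psi> (rotation01 a x)"
        using rotation01_in_unit_interval[OF a True] by (simp add: \<psi>_def)
      then show ?thesis
        by (cases "x < 1 - a") (simp_all add: rotation01_def algebra_simps)
    qed simp
  qed
  also have "\<dots> = (\<integral>\<^sup>+x. \<psi> (a + x) \<partial>lebesgue) + (\<integral>\<^sup>+x. \<psi> ((a - 1) + x) \<partial>lebesgue)"
    using measurable_compose[OF lebesgue_measurable_translation \<psi>_meas]
    by (intro nn_integral_add) auto
  also have "\<dots> = ennreal 2 * (\<integral>\<^sup>+x. ennreal \<bar>\<phi> x\<bar> \<partial>II)"
  proof -
    have "(\<integral>\<^sup>+x. \<psi> (t + x) \<partial>lebesgue) = (\<integral>\<^sup>+x. ennreal \<bar>\<phi> x\<bar> \<partial>II)" for t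
      using nn_integral_II_affine[OF \<phi>, of 1 t] by (simp add: \<psi>_def)
    then show ?thesis
      by (simp add: mult_2)
  qed
  finally show "(\<integral>\<^sup>+x. ennreal \<bar>\<phi> (rotation01 a x)\<bar> \<partial>II) \<le> ennreal 2 * (\<integral>\<^sup>+x. ennreal \<bar>\<phi> x\<bar> \<partial>II)" .
qed simp

section \<open>Comparison of components along a trajectory\<close>

lemma mean_field_lipschitz:
  fixes f g :: "real \<Rightarrow> real \<Rightarrow> real"
  assumes lf: "Lf-lipschitz_on UNIV (\<lambda>(a, b). f a b)"
    and lg: "Lg-lipschitz_on UNIV (\<lambda>(a, b). g a b)" and v: "integrable II v"
  shows "(Lf * (1 + Lg))-lipschitz_on UNIV (\<lambda>a. f a (\<integral>y. g a (v y) \<partial>II))"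
proof (rule lipschitz_onI)
  interpret finite_measure II by (rule finite_measure_II)
  have Lf: "0 \<le> Lf" and Lg: "0 \<le> Lg"
    using lf lg lipschitz_on_nonneg by blast+
  then show "0 \<le> Lf * (1 + Lg)" by simp
  fix a b :: real
  have int: "integrable II (\<lambda>y. g c (v y))" for c
    by (rule integrable_lipschitz_comp[OF lipschitz_on_case_prod_left[OF lg] v])
  have "\<bar>(\<integral>y. g a (v y) \<partial>II) - (\<integral>y. g b (v y) \<partial>II)\<bar> \<le> (\<integral>y. \<bar>g a (v y) - g b (v y)\<bar> \<partial>II)"
    using int by (simp flip: Bochner_Integration.integral_diff)
  also have "\<dots> \<le> (\<integral>y. Lg * \<bar>a - b\<bar> \<partial>II)"
    using int lipschitz_on_case_prod_abs_le[OF lg, of a "v y" b "v y" for y]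
    by (intro integral_mono) auto
  also have "\<dots> = Lg * \<bar>a - b\<bar>" by simp
  finally have "\<bar>f a (\<integral>y. g a (v y) \<partial>II) - f b (\<integral>y. g b (v y) \<partial>II)\<bar> \<le> Lf * (\<bar>a - b\<bar> + Lg * \<bar>a - b\<bar>)"
    using lipschitz_on_case_prod_abs_le[OF lf] Lf by (meson add_left_mono mult_left_mono order_trans)
  then show "dist (f a (\<integral>y. g a (v y) \<partial>II)) (f b (\<integral>y. g b (v y) \<partial>II)) \<le> Lf * (1 + Lg) * dist a b"
    by (simp add: dist_real_def algebra_simps)
qed

lemma integrable_rhs:
  assumes "Lf-lipschitz_on UNIV (\<lambda>(a, b). f a b)" and "Lg-lipschitz_on UNIV (\<lambda>(a, b). g a b)"
    and "integrable II v"
  shows "integrable II (rhs f g v)"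
  unfolding rhs_def
  by (rule finite_measure.integrable_lipschitz_comp[OF finite_measure_II mean_field_lipschitz[OF assms] assms(3)])

lemma rhs_lipschitz:
  assumes "Lf-lipschitz_on UNIV (\<lambda>(a, b). f a b)" and "Lg-lipschitz_on UNIV (\<lambda>(a, b). g a b)"
    and "integrable II v"
  shows "\<bar>rhs f g v x - rhs f g v y\<bar> \<le> Lf * (1 + Lg) * \<bar>v x - v y\<bar>"
  using lipschitz_onD[OF mean_field_lipschitz[OF assms], of "v x" "v y"]
  by (simp add: rhs_def dist_real_def)

lemma trajectory_integrable: "trajectory f g u \<Longrightarrow> integrable II (u t)"
  by (simp add: trajectory_def L1I_def)

lemma trajectory_L1_derivative:
  assumes lf: "Lf-lipschitz_on UNIV (\<lambda>(a, b). f a b)" and lg: "Lg-lipschitz_on UNIV (\<lambda>(a, b). g a b)"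
    and tr: "trajectory f g u"
  shows "((\<lambda>h. \<integral>x. \<bar>(u (t + h) x - u t x) / h - rhs f g (u t) x\<bar> \<partial>II) \<longlongrightarrow> 0) (at 0)"
proof -
  have int: "integrable II (\<lambda>x. (u (t + h) x - u t x) / h - rhs f g (u t) x)" for h
    using trajectory_integrable[OF tr] integrable_rhs[OF lf lg trajectory_integrable[OF tr]] by auto
  have lim: "((\<lambda>h. \<integral>\<^sup>+x. ennreal \<bar>(u (t + h) x - u t x) / h - rhs f g (u t) x\<bar> \<partial>II) \<longlongrightarrow> 0) (at 0)"
    using tr unfolding trajectory_def by blast
  have eq: "(\<lambda>h. \<integral>\<^sup>+x. ennreal \<bar>(u (t + h) x - u t x) / h - rhs f g (u t) x\<bar> \<partial>II)
      = (\<lambda>h. ennreal (\<integral>x. \<bar>(u (t + h) x - u t x) / h - rhs f g (u t) x\<bar> \<partial>II))"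
    by (intro ext nn_integral_eq_integral integrable_abs int) auto
  have "((\<lambda>h. ennreal (\<integral>x. \<bar>(u (t + h) x - u t x) / h - rhs f g (u t) x\<bar> \<partial>II)) \<longlongrightarrow> ennreal 0) (at 0)"
    using lim unfolding eq by simp
  then show ?thesis
    by (subst (asm) tendsto_ennreal_iff) auto
qed

lemma trajectory_sampled_difference_integrable:
  assumes "trajectory f g u" and "L1_comp_bounded M c1 p1" and "L1_comp_bounded M c2 p2"
  shows "integrable M (\<lambda>\<omega>. u r (p1 \<omega>) - u r (p2 \<omega>))"
  using L1_comp_bounded_integrable(1)[OF assms(2) trajectory_integrable[OF assms(1)]]
    L1_comp_bounded_integrable(1)[OF assms(3) trajectory_integrable[OF assms(1)]]
  by auto

lemma trajectory_sampled_distance_increment_le: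
  fixes u :: "real \<Rightarrow> real \<Rightarrow> real" and M :: "'m measure"
  assumes lf: "Lf-lipschitz_on UNIV (\<lambda>(a, b). f a b)" and lg: "Lg-lipschitz_on UNIV (\<lambda>(a, b). g a b)"
    and tr: "trajectory f g u"
    and p1: "L1_comp_bounded M c1 p1" and p2: "L1_comp_bounded M c2 p2"
  defines "D \<equiv> \<lambda>r. \<integral>\<omega>. \<bar>u r (p1 \<omega>) - u r (p2 \<omega>)\<bar> \<partial>M"
  shows "\<bar>D (t + h) - D t\<bar> \<le> \<bar>h\<bar> * (Lf * (1 + Lg) * D t
      + (c1 + c2) * (\<integral>x. \<bar>(u (t + h) x - u t x) / h - rhs f g (u t) x\<bar> \<partial>II))"
proof -
  define C where "C = Lf * (1 + Lg)"
  define F where "F = rhs f g (u t)"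
  define q where "q x = (u (t + h) x - u t x) / h - F x" for x
  define \<Delta> where "\<Delta> r \<omega> = u r (p1 \<omega>) - u r (p2 \<omega>)" for r \<omega>
  have u_int: "integrable II (u r)" for r
    using tr by (rule trajectory_integrable)
  have q_int: "integrable II q"
    unfolding q_def F_def using u_int integrable_rhs[OF lf lg u_int] by auto
  have qp_int: "integrable M (\<lambda>\<omega>. \<bar>q (p1 \<omega>)\<bar>)" "integrable M (\<lambda>\<omega>. \<bar>q (p2 \<omega>)\<bar>)"
    using L1_comp_bounded_integrable(1)[OF p1 q_int] L1_comp_bounded_integrable(1)[OF p2 q_int] by auto
  have \<Delta>_int: "integrable M (\<lambda>\<omega>. \<bar>\<Delta> r \<omega>\<bar>)" for r
    unfolding \<Delta>_def using trajectory_sampled_difference_integrable[OF tr p1 p2] by auto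
  have D_eq: "D r = (\<integral>\<omega>. \<bar>\<Delta> r \<omega>\<bar> \<partial>M)" for r
    by (simp add: D_def \<Delta>_def)
  have "u (t + h) x = u t x + h * (q x + F x)" for x
    by (cases "h = 0") (simp_all add: q_def)
  then have pointwise: "\<bar>\<bar>\<Delta> (t + h) \<omega>\<bar> - \<bar>\<Delta> t \<omega>\<bar>\<bar> \<le> \<bar>h\<bar> * (C * \<bar>\<Delta> t \<omega>\<bar> + \<bar>q (p1 \<omega>)\<bar> + \<bar>q (p2 \<omega>)\<bar>)" for \<omega>
    unfolding \<Delta>_def C_def F_def by (simp only:) (rule abs_diff_step_le[OF rhs_lipschitz[OF lf lg u_int]])
  have "\<bar>D (t + h) - D t\<bar> = \<bar>\<integral>\<omega>. \<bar>\<Delta> (t + h) \<omega>\<bar> - \<bar>\<Delta> t \<omega>\<bar> \<partial>M\<bar>"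
    using \<Delta>_int by (simp add: D_eq)
  also have "\<dots> \<le> (\<integral>\<omega>. \<bar>\<bar>\<Delta> (t + h) \<omega>\<bar> - \<bar>\<Delta> t \<omega>\<bar>\<bar> \<partial>M)"
    by (rule integral_abs_bound)
  also have "\<dots> \<le> (\<integral>\<omega>. \<bar>h\<bar> * (C * \<bar>\<Delta> t \<omega>\<bar> + \<bar>q (p1 \<omega>)\<bar> + \<bar>q (p2 \<omega>)\<bar>) \<partial>M)"
    using pointwise \<Delta>_int qp_int by (intro integral_mono) auto
  also have "\<dots> = \<bar>h\<bar> * (C * D t + (\<integral>\<omega>. \<bar>q (p1 \<omega>)\<bar> \<partial>M) + (\<integral>\<omega>. \<bar>q (p2 \<omega>)\<bar> \<partial>M))"
    using \<Delta>_int qp_int by (simp add: D_eq)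
  also have "\<dots> \<le> \<bar>h\<bar> * (C * D t + (c1 + c2) * (\<integral>x. \<bar>q x\<bar> \<partial>II))"
    using L1_comp_bounded_integrable(2)[OF p1 q_int] L1_comp_bounded_integrable(2)[OF p2 q_int]
    by (intro mult_left_mono) (auto simp: distrib_right)
  finally show ?thesis
    by (simp add: C_def q_def F_def)
qed

lemma trajectory_sampled_distance_local_growth:
  fixes u :: "real \<Rightarrow> real \<Rightarrow> real" and M :: "'m measure"
  assumes lf: "Lf-lipschitz_on UNIV (\<lambda>(a, b). f a b)" and lg: "Lg-lipschitz_on UNIV (\<lambda>(a, b). g a b)"
    and tr: "trajectory f g u"
    and p1: "L1_comp_bounded M c1 p1" and p2: "L1_comp_bounded M c2 p2" and "0 < e"
  defines "D \<equiv> \<lambda>r. \<integral>\<omega>. \<bar>u r (p1 \<omega>) - u r (p2 \<omega>)\<bar> \<partial>M"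
  shows "\<forall>\<^sub>F h in at 0. \<bar>D (t + h) - D t\<bar> \<le> \<bar>h\<bar> * (Lf * (1 + Lg) * D t + e)"
proof -
  define R where "R h = (\<integral>x. \<bar>(u (t + h) x - u t x) / h - rhs f g (u t) x\<bar> \<partial>II)" for h
  have "0 \<le> c1" "0 \<le> c2"
    using p1 p2 by (auto simp: L1_comp_bounded_def)
  then have "0 < e / (c1 + c2 + 1)"
    using \<open>0 < e\<close> by simp
  with trajectory_L1_derivative[OF lf lg tr, of t]
  have "\<forall>\<^sub>F h in at 0. R h < e / (c1 + c2 + 1)"
    unfolding R_def by (rule order_tendstoD(2))
  then show ?thesis
  proof eventually_elim
    case (elim h)
    have "(c1 + c2) * R h \<le> (c1 + c2 + 1) * R h"
      by (intro mult_right_mono) (auto simp: R_def)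
    also have "\<dots> \<le> e"
      using elim \<open>0 \<le> c1\<close> \<open>0 \<le> c2\<close> by (simp add: field_simps)
    finally have "\<bar>h\<bar> * (Lf * (1 + Lg) * D t + (c1 + c2) * R h) \<le> \<bar>h\<bar> * (Lf * (1 + Lg) * D t + e)"
      by (intro mult_left_mono) auto
    with trajectory_sampled_distance_increment_le[OF lf lg tr p1 p2, of t h]
    show ?case by (simp add: D_def R_def)
  qed
qed

lemma trajectory_sampled_distance_bound:
  fixes u :: "real \<Rightarrow> real \<Rightarrow> real" and M :: "'m measure"
  assumes lf: "Lf-lipschitz_on UNIV (\<lambda>(a, b). f a b)" and lg: "Lg-lipschitz_on UNIV (\<lambda>(a, b). g a b)"
    and tr: "trajectory f g u"
    and p1: "L1_comp_bounded M c1 p1" and p2: "L1_comp_bounded M c2 p2"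
  shows "(\<integral>\<omega>. \<bar>u s (p1 \<omega>) - u s (p2 \<omega>)\<bar> \<partial>M)
    \<le> exp ((Lf * (1 + Lg) + 1) * \<bar>s - t\<bar>) * (\<integral>\<omega>. \<bar>u t (p1 \<omega>) - u t (p2 \<omega>)\<bar> \<partial>M)"
  using local_growth_exp_bound[OF _ _ trajectory_sampled_distance_local_growth[OF lf lg tr p1 p2]]
    lipschitz_on_nonneg[OF lf] lipschitz_on_nonneg[OF lg]
  by (simp add: mult.commute)

lemma trajectory_sampled_difference_AE_le:
  fixes u :: "real \<Rightarrow> real \<Rightarrow> real" and M :: "'m measure"
  assumes lf: "Lf-lipschitz_on UNIV (\<lambda>(a, b). f a b)" and lg: "Lg-lipschitz_on UNIV (\<lambda>(a, b). g a b)"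
    and tr: "trajectory f g u"
    and p1: "L1_comp_bounded M c1 p1" and p2: "L1_comp_bounded M c2 p2"
  shows "AE \<omega> in M. \<bar>u s (p1 \<omega>) - u s (p2 \<omega>)\<bar>
    \<le> exp ((Lf * (1 + Lg) + 1) * \<bar>s - t\<bar>) * \<bar>u t (p1 \<omega>) - u t (p2 \<omega>)\<bar>"
proof (rule AE_le_if_integral_indicator_le)
  let ?k = "exp ((Lf * (1 + Lg) + 1) * \<bar>s - t\<bar>)"
  note int = trajectory_sampled_difference_integrable[OF tr p1 p2]
  show "integrable M (\<lambda>\<omega>. \<bar>u s (p1 \<omega>) - u s (p2 \<omega>)\<bar>)"
    and "integrable M (\<lambda>\<omega>. ?k * \<bar>u t (p1 \<omega>) - u t (p2 \<omega>)\<bar>)"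
    using int by auto
  fix E assume E: "E \<in> sets M"
  have "(\<integral>\<omega>. indicator E \<omega> * \<bar>u s (p1 \<omega>) - u s (p2 \<omega>)\<bar> \<partial>M)
      = (\<integral>\<omega>. \<bar>u s (p1 \<omega>) - u s (p2 \<omega>)\<bar> \<partial>restrict_space M E)"
    using E by (simp add: integral_restrict_space)
  also have "\<dots> \<le> ?k * (\<integral>\<omega>. \<bar>u t (p1 \<omega>) - u t (p2 \<omega>)\<bar> \<partial>restrict_space M E)"
    using L1_comp_bounded_restrict_space[OF p1 E] L1_comp_bounded_restrict_space[OF p2 E]
    by (rule trajectory_sampled_distance_bound[OF lf lg tr])
  also have "\<dots> = (\<integral>\<omega>. ?k * (indicator E \<omega> * \<bar>u t (p1 \<omega>) - u t (p2 \<omega>)\<bar>) \<partial>M)"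
    using E by (simp add: integral_restrict_space)
  also have "\<dots> = (\<integral>\<omega>. indicator E \<omega> * (?k * \<bar>u t (p1 \<omega>) - u t (p2 \<omega>)\<bar>) \<partial>M)"
    by (simp only: mult.left_commute)
  finally show "(\<integral>\<omega>. indicator E \<omega> * \<bar>u s (p1 \<omega>) - u s (p2 \<omega>)\<bar> \<partial>M)
      \<le> (\<integral>\<omega>. indicator E \<omega> * (?k * \<bar>u t (p1 \<omega>) - u t (p2 \<omega>)\<bar>) \<partial>M)" .
qed

lemma trajectory_preserves_AE_coincidence:
  fixes u :: "real \<Rightarrow> real \<Rightarrow> real" and M :: "'m measure"
  assumes lf: "Lf-lipschitz_on UNIV (\<lambda>(a, b). f a b)" and lg: "Lg-lipschitz_on UNIV (\<lambda>(a, b). g a b)"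
    and tr: "trajectory f g u"
    and p1: "L1_comp_bounded M c1 p1" and p2: "L1_comp_bounded M c2 p2"
    and "AE \<omega> in M. u 0 (p1 \<omega>) = u 0 (p2 \<omega>)"
  shows "AE \<omega> in M. u t (p1 \<omega>) = u t (p2 \<omega>)"
  using trajectory_sampled_difference_AE_le[OF lf lg tr p1 p2, of t 0] assms(6)
  by eventually_elim simp

lemma trajectory_pairwise_AE_le:
  assumes lf: "Lf-lipschitz_on UNIV (\<lambda>(a, b). f a b)" and lg: "Lg-lipschitz_on UNIV (\<lambda>(a, b). g a b)"
    and tr: "trajectory f g u"
  shows "AE x in II. AE y in II. \<bar>u s x - u s y\<bar> \<le> exp ((Lf * (1 + Lg) + 1) * \<bar>s - t\<bar>) * \<bar>u t x - u t y\<bar>"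
proof -
  interpret pair_sigma_finite II II by (rule pair_sigma_finite_II)
  show ?thesis
    using AE_pair[OF trajectory_sampled_difference_AE_le[OF lf lg tr L1_comp_bounded_fst L1_comp_bounded_snd]]
    by simp
qed

lemma dyn_invariant_INT:
  "(\<And>k. k \<in> K \<Longrightarrow> dyn_invariant f g (S k)) \<Longrightarrow> dyn_invariant f g (\<Inter>k\<in>K. S k)"
  unfolding dyn_invariant_def by blast

lemma dyn_invariant_cluster:
  assumes lf: "Lf-lipschitz_on UNIV (\<lambda>(a, b). f a b)" and lg: "Lg-lipschitz_on UNIV (\<lambda>(a, b). g a b)"
  shows "dyn_invariant f g (cluster A)"
  unfolding dyn_invariant_def
proof (intro allI impI)
  fix u t assume "trajectory f g u \<and> u 0 \<in> cluster A"
  then have tr: "trajectory f g u" and "u 0 \<in> cluster A" by auto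
  then obtain c where c: "AE x in II. x \<in> A \<longrightarrow> u 0 x = c"
    by (auto simp: cluster_def)
  have "AE x in II. AE y in II. x \<in> A \<and> y \<in> A \<longrightarrow> u t x = u t y"
    using trajectory_pairwise_AE_le[OF lf lg tr, of t 0] c
  proof eventually_elim
    case (elim x)
    from elim(1) c show ?case
      by eventually_elim (use elim(2) in auto)
  qed
  then have "\<exists>c. AE x in II. x \<in> A \<longrightarrow> u t x = c"
    by (rule AE_eq_const_on_if_AE_pairwise_eq)
  then show "u t \<in> cluster A"
    using tr by (simp add: cluster_def trajectory_def)
qed

lemma dyn_invariant_inj_ae_set:
  assumes lf: "Lf-lipschitz_on UNIV (\<lambda>(a, b). f a b)" and lg: "Lg-lipschitz_on UNIV (\<lambda>(a, b). g a b)"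
  shows "dyn_invariant f g inj_ae_set"
  unfolding dyn_invariant_def
proof (intro allI impI)
  fix u t assume "trajectory f g u \<and> u 0 \<in> inj_ae_set"
  then have tr: "trajectory f g u" and "u 0 \<in> inj_ae_set" by auto
  then obtain N where "N \<in> null_sets II" "inj_on (u 0) (space II - N)"
    by (auto simp: inj_ae_set_def)
  then have "\<exists>N' \<in> null_sets II. inj_on (u t) (space II - N')"
    using trajectory_integrable[OF tr, of t] trajectory_pairwise_AE_le[OF lf lg tr, of 0 t]
    by (intro inj_on_AE_if_pairwise_AE_le) auto
  then show "u t \<in> inj_ae_set"
    using tr by (simp add: inj_ae_set_def trajectory_def)
qed

lemma dyn_invariant_symm_set:
  assumes lf: "Lf-lipschitz_on UNIV (\<lambda>(a, b). f a b)" and lg: "Lg-lipschitz_on UNIV (\<lambda>(a, b). g a b)"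
  shows "dyn_invariant f g symm_set"
  unfolding dyn_invariant_def
proof (intro allI impI)
  fix u t assume "trajectory f g u \<and> u 0 \<in> symm_set"
  then have tr: "trajectory f g u" and symm0: "AE x in II. u 0 x = u 0 (1 - x)"
    by (auto simp: symm_set_def)
  have "AE x in II. u t x = u t (1 - x)"
    using trajectory_preserves_AE_coincidence[OF lf lg tr L1_comp_bounded_id L1_comp_bounded_reflection] symm0
    by simp
  then show "u t \<in> symm_set"
    using tr by (simp add: symm_set_def trajectory_def)
qed

lemma dyn_invariant_periodic_set:
  assumes lf: "Lf-lipschitz_on UNIV (\<lambda>(a, b). f a b)" and lg: "Lg-lipschitz_on UNIV (\<lambda>(a, b). g a b)"
    and "1 \<le> q"
  shows "dyn_invariant f g (periodic_set q)"
  unfolding dyn_invariant_def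
proof (intro allI impI)
  have a: "0 \<le> 1 / real q" "1 / real q \<le> 1"
    using \<open>1 \<le> q\<close> by auto
  have rotation: "AE x in II. frac (x + 1 / real q) = rotation01 (1 / real q) x"
    using AE_II_less_1 AE_space by eventually_elim (auto intro: frac_add_eq_rotation01[OF a])
  fix u t assume "trajectory f g u \<and> u 0 \<in> periodic_set q"
  then have tr: "trajectory f g u" and periodic0: "AE x in II. u 0 (frac (x + 1 / real q)) = u 0 x"
    by (auto simp: periodic_set_def)
  from rotation periodic0 have "AE x in II. u 0 (rotation01 (1 / real q) x) = u 0 x"
    by eventually_elim simp
  then have "AE x in II. u t (rotation01 (1 / real q) x) = u t x"
    using trajectory_preserves_AE_coincidence[OF lf lg tr L1_comp_bounded_rotation01[OF a] L1_comp_bounded_id]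
    by simp
  from rotation this have "AE x in II. u t (frac (x + 1 / real q)) = u t x"
    by eventually_elim simp
  then show "u t \<in> periodic_set q"
    using tr by (simp add: periodic_set_def trajectory_def)
qed

theorem proposition4p8:
  fixes f g :: "real \<Rightarrow> real \<Rightarrow> real"
  assumes "\<exists>L. L-lipschitz_on UNIV (\<lambda>(a, b). f a b)"
      and "\<exists>L. L-lipschitz_on UNIV (\<lambda>(a, b). g a b)"
  shows "(\<forall>A. A \<in> sets II \<longrightarrow> dyn_invariant f g (cluster A))
       \<and> (\<forall>(n::nat) (A::nat \<Rightarrow> real set). (\<forall>k\<in>{1..n}. A k \<in> sets II)
            \<longrightarrow> dyn_invariant f g (\<Inter>k\<in>{1..n}. cluster (A k)))
       \<and> dyn_invariant f g inj_ae_set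
       \<and> (\<forall>q::nat. q \<ge> 1 \<longrightarrow> dyn_invariant f g (periodic_set q))
       \<and> dyn_invariant f g symm_set"
proof -
  obtain Lf Lg where lf: "Lf-lipschitz_on UNIV (\<lambda>(a, b). f a b)"
    and lg: "Lg-lipschitz_on UNIV (\<lambda>(a, b). g a b)"
    using assms by blast
  show ?thesis
    using dyn_invariant_cluster[OF lf lg] dyn_invariant_INT[OF dyn_invariant_cluster[OF lf lg]]
      dyn_invariant_inj_ae_set[OF lf lg] dyn_invariant_periodic_set[OF lf lg]
      dyn_invariant_symm_set[OF lf lg]
    by auto
qed

end
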